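(* Let $q\in(0,1)$ and let $a,b,\alpha,\beta$ be positive real numbers such that $\alpha+\beta t>1$ for all $t\in(0,\infty)$. Define \[ \phi(t)=\frac{(1-q)^{-b\beta t}e^{a\beta\gamma t}\,\Gamma(\alpha+\beta t)^a}{\Gamma_q(\alpha+\beta t)^b},\qquad t\in(0,\infty). \] Then $\phi$ is increasing on $(0,\infty)$, and for every $t\in(0,1)$, \[ \frac{(1-q)^{b\beta t}e^{-a\beta\gamma t}\,\Gamma(\alpha)^a}{\Gamma_q(\alpha)^b} <\frac{\Gamma(\alpha+\beta t)^a}{\Gamma_q(\alpha+\beta t)^b} <\frac{(1-q)^{b\beta(t-1)}e^{a\beta\gamma(1-t)}\,\Gamma(\alpha+\beta)^a}{\Gamma_q(\alpha+\beta)^b}. \]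
   Context: $\Gamma$ is Euler's Gamma function and $\gamma$ is the Euler–Mascheroni constant. For $q\in(0,1)$ and $t>0$, the $q$-Gamma function is $\Gamma_q(t)=(1-q)^{1-t}\prod_{n=1}^{\infty}\frac{1-q^n}{1-q^{t+n}}$. *)

theory Defs
  imports "HOL-Analysis.Analysis"
begin

definition qGamma :: "real \<Rightarrow> real \<Rightarrow> real" where
  "qGamma q t = (1 - q) powr (1 - t) *
     (\<Prod>n. (1 - q ^ (n + 1)) / (1 - q powr (t + real (n + 1))))"

end

theory Submission
  imports Defs
begin

text \<open>Writing \<open>\<Gamma>\<^sub>q(x) = (1-q)\<^bsup>1-x\<^esup> P\<^sub>q(x)\<close> with \<open>P\<^sub>q\<close> the infinite product, one has
  \<open>\<Gamma>(x)\<^sup>a / \<Gamma>\<^sub>q(x)\<^sup>b = (1-q)\<^bsup>b(x-1)\<^esup> e\<^bsup>-a\<gamma>x\<^esup> e\<^bsup>\<psi>(x)\<^esup>\<close> with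
  \<open>\<psi>(x) = a(\<gamma>x + ln \<Gamma>(x)) - b ln P\<^sub>q(x)\<close>. The prefactors in \<open>\<phi>\<close> cancel exactly the explicit
  exponentials, so \<open>\<phi>(t)\<close> is a positive constant times \<open>e\<^bsup>\<psi>(\<alpha>+\<beta>t)\<^esup>\<close>. Now \<open>\<psi>\<close> is strictly
  increasing on \<open>[1,\<infinity>)\<close>: \<open>\<gamma>x + ln \<Gamma>(x)\<close> has derivative \<open>\<gamma> + \<Psi>(x) \<ge> \<gamma> + \<Psi>(1) = 0\<close>,
  and every factor \<open>(1-q\<^sup>n)/(1-q\<^bsup>x+n\<^esup>)\<close> of \<open>P\<^sub>q\<close> strictly decreases in \<open>x\<close>. The two
  inequalities are \<open>\<phi>(0) < \<phi>(t) < \<phi>(1)\<close> unfolded.\<close>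

lemma euler_mascheroni_plus_ln_Gamma_mono:
  fixes x y :: real
  assumes "1 \<le> x" "x \<le> y"
  shows "euler_mascheroni * x + ln_Gamma x \<le> euler_mascheroni * y + ln_Gamma y"
proof (rule DERIV_nonneg_imp_nondecreasing[OF assms(2)])
  fix z :: real
  assume z: "x \<le> z" "z \<le> y"
  have "Digamma (1::real) \<le> Digamma z"
    by (rule Digamma_real_mono) (use z assms in auto)
  hence "0 \<le> euler_mascheroni + Digamma z" by simp
  moreover have "((\<lambda>x. euler_mascheroni * x + ln_Gamma x) has_real_derivative
      (euler_mascheroni + Digamma z)) (at z)"
    using z assms by (auto intro!: derivative_eq_intros)
  ultimately show "\<exists>d. ((\<lambda>x. euler_mascheroni * x + ln_Gamma x) has_real_derivative d) (at z)
      \<and> d \<ge> 0"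
    by blast
qed

definition qGamma_factor :: "real \<Rightarrow> real \<Rightarrow> nat \<Rightarrow> real" where
  "qGamma_factor q x n = (1 - q ^ (n + 1)) / (1 - q powr (x + real (n + 1)))"

definition qGamma_prod :: "real \<Rightarrow> real \<Rightarrow> real" where
  "qGamma_prod q x = (\<Prod>n. qGamma_factor q x n)"

lemma qGamma_eq_qGamma_prod: "qGamma q x = (1 - q) powr (1 - x) * qGamma_prod q x"
  unfolding qGamma_def qGamma_prod_def qGamma_factor_def by simp

lemma qGamma_factor_bounds:
  assumes q: "0 < q" "q < 1" and x: "0 < x"
  shows "0 < qGamma_factor q x n" "qGamma_factor q x n < 1"
    "\<bar>qGamma_factor q x n - 1\<bar> \<le> q ^ (n + 1) / (1 - q)"
proof -
  let ?p = "q powr (x + real (n + 1))"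
  have "?p < q powr real (n + 1)"
    using q x by (intro powr_less_mono') auto
  hence p_less: "?p < q ^ (n + 1)"
    using q powr_realpow[of q "n + 1"] by simp
  have "q ^ (n + 1) \<le> q"
    using q by (simp add: power_le_one mult_le_cancel_left1 less_imp_le)
  hence denom_ge: "1 - q \<le> 1 - ?p" using p_less by linarith
  have "q ^ (n + 1) < 1" using q power_less_one_iff[of q "n + 1"] by simp
  hence denom_pos: "0 < 1 - ?p" using p_less by linarith
  show "0 < qGamma_factor q x n"
    unfolding qGamma_factor_def using \<open>q ^ (n + 1) < 1\<close> denom_pos by simp
  show "qGamma_factor q x n < 1"
    unfolding qGamma_factor_def using p_less denom_pos by simp
  have "\<bar>qGamma_factor q x n - 1\<bar> = (q ^ (n + 1) - ?p) / (1 - ?p)"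
    unfolding qGamma_factor_def using p_less denom_pos by (simp add: field_simps)
  also have "\<dots> \<le> q ^ (n + 1) / (1 - ?p)"
    using q denom_pos by (intro divide_right_mono) auto
  also have "\<dots> \<le> q ^ (n + 1) / (1 - q)"
    using q denom_ge by (intro divide_left_mono) auto
  finally show "\<bar>qGamma_factor q x n - 1\<bar> \<le> q ^ (n + 1) / (1 - q)" .
qed

lemma convergent_prod_qGamma_factor:
  assumes "0 < q" "q < 1" "0 < x"
  shows "convergent_prod (qGamma_factor q x)"
proof -
  have "summable (\<lambda>n. q ^ (n + 1) / (1 - q))"
    using assms by (intro summable_divide summable_mult summable_geometric) auto
  hence "summable (\<lambda>n. \<bar>qGamma_factor q x n - 1\<bar>)"
    by (rule summable_comparison_test[rotated]) (use qGamma_factor_bounds[OF assms] in auto)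
  moreover have "qGamma_factor q x n - 1 \<noteq> -1" for n
    using qGamma_factor_bounds(1)[OF assms, of n] by auto
  ultimately have "convergent_prod (\<lambda>n. 1 + (qGamma_factor q x n - 1))"
    by (rule summable_imp_convergent_prod_real)
  thus ?thesis by simp
qed

lemma qGamma_factor_strict_antimono:
  assumes q: "0 < q" "q < 1" and "0 < x" "x < y"
  shows "qGamma_factor q y n < qGamma_factor q x n"
proof -
  have "q powr (y + real (n + 1)) < q powr (x + real (n + 1))"
    using assms by (intro powr_less_mono') auto
  moreover have "q powr (x + real (n + 1)) < q powr 0"
    using assms by (intro powr_less_mono') auto
  moreover have "0 < 1 - q ^ (n + 1)"
    using q power_less_one_iff[of q "n + 1"] by simp
  ultimately show ?thesis
    unfolding qGamma_factor_def using q by (intro divide_strict_left_mono) auto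
qed

lemma qGamma_prod_pos:
  assumes "0 < q" "q < 1" "0 < x"
  shows "0 < qGamma_prod q x"
  unfolding qGamma_prod_def
  by (rule less_0_prodinf[OF convergent_prod_qGamma_factor[OF assms]])
     (use qGamma_factor_bounds[OF assms] in auto)

lemma qGamma_prod_strict_antimono:
  assumes q: "0 < q" "q < 1" and x: "0 < x" "x < y"
  shows "qGamma_prod q y < qGamma_prod q x"
proof -
  have y: "0 < y" using x by simp
  show ?thesis
    unfolding qGamma_prod_def
    by (rule has_prod_less[of "qGamma_factor q y" 0 "qGamma_factor q x"])
       (use qGamma_factor_strict_antimono[OF q x] convergent_prod_qGamma_factor[OF q x(1)]
          convergent_prod_qGamma_factor[OF q y] qGamma_factor_bounds[OF q y]
        in \<open>auto intro: less_imp_le\<close>)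
qed

definition Gamma_qGamma_kernel :: "real \<Rightarrow> real \<Rightarrow> real \<Rightarrow> real \<Rightarrow> real" where
  "Gamma_qGamma_kernel q a b x =
     a * (euler_mascheroni * x + ln_Gamma x) - b * ln (qGamma_prod q x)"

lemma Gamma_qGamma_kernel_strict_mono:
  assumes "0 < q" "q < 1" "0 \<le> a" "0 < b"
  shows "strict_mono_on {1..} (Gamma_qGamma_kernel q a b)"
proof (rule strict_mono_onI)
  fix x y :: real
  assume xy: "x \<in> {1..}" "y \<in> {1..}" "x < y"
  have "a * (euler_mascheroni * x + ln_Gamma x) \<le> a * (euler_mascheroni * y + ln_Gamma y)"
    using xy assms by (intro mult_left_mono euler_mascheroni_plus_ln_Gamma_mono) auto
  moreover have "b * ln (qGamma_prod q y) < b * ln (qGamma_prod q x)"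
    using xy assms qGamma_prod_pos[of q y] qGamma_prod_strict_antimono[of q x y] by simp
  ultimately show "Gamma_qGamma_kernel q a b x < Gamma_qGamma_kernel q a b y"
    unfolding Gamma_qGamma_kernel_def by linarith
qed

lemma Gamma_powr_div_qGamma_powr:
  assumes q: "0 < q" "q < 1" and x: "0 < x"
  shows "Gamma x powr a / qGamma q x powr b =
    (1 - q) powr (b * (x - 1)) * exp (Gamma_qGamma_kernel q a b x - a * euler_mascheroni * x)"
proof -
  have "Gamma x powr a = exp (a * ln_Gamma x)"
    using x by (simp add: powr_def Gamma_real_pos_exp)
  moreover have "qGamma q x powr b = ((1 - q) powr (1 - x)) powr b * qGamma_prod q x powr b"
    using q qGamma_prod_pos[OF q x] by (simp add: qGamma_eq_qGamma_prod powr_mult)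
  hence "qGamma q x powr b = (1 - q) powr (b * (1 - x)) * exp (b * ln (qGamma_prod q x))"
    using qGamma_prod_pos[OF q x] by (simp add: powr_powr powr_def mult.commute)
  moreover have "(1 - q) powr (b * (x - 1)) * (1 - q) powr (b * (1 - x)) = 1"
    using q by (simp add: powr_add[symmetric] algebra_simps)
  ultimately show ?thesis
    unfolding Gamma_qGamma_kernel_def using q
    by (simp add: field_simps exp_diff exp_add)
qed

lemma strict_mono_on_rescaled_Gamma_qGamma_ratio:
  fixes q a b \<alpha> \<beta> :: real and \<phi> :: "real \<Rightarrow> real"
  assumes q: "0 < q" "q < 1" and "0 \<le> a" "0 < b" "1 \<le> \<alpha>" "0 < \<beta>"
    and \<phi>_def: "\<And>t. \<phi> t = (1 - q) powr (- b * \<beta> * t) * exp (a * \<beta> * euler_mascheroni * t)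
                 * Gamma (\<alpha> + \<beta> * t) powr a / qGamma q (\<alpha> + \<beta> * t) powr b"
  shows "strict_mono_on {0..} \<phi>"
proof -
  define \<psi> where "\<psi> = Gamma_qGamma_kernel q a b"
  have arg_ge_1: "1 \<le> \<alpha> + \<beta> * t" if "0 \<le> t" for t
    using that assms by (simp add: add_increasing2)
  have \<phi>_eq: "\<phi> t = (1 - q) powr (b * (\<alpha> - 1)) * exp (\<psi> (\<alpha> + \<beta> * t) - a * euler_mascheroni * \<alpha>)"
    if "0 \<le> t" for t
  proof -
    have "\<phi> t = ((1 - q) powr (- b * \<beta> * t) * (1 - q) powr (b * (\<alpha> + \<beta> * t - 1)))
        * (exp (a * \<beta> * euler_mascheroni * t)
           * exp (\<psi> (\<alpha> + \<beta> * t) - a * euler_mascheroni * (\<alpha> + \<beta> * t)))"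
      using Gamma_powr_div_qGamma_powr[OF q, of "\<alpha> + \<beta> * t" a b] arg_ge_1[OF that]
      unfolding \<phi>_def \<psi>_def times_divide_eq_right[symmetric] by (simp add: ac_simps)
    thus ?thesis
      by (simp add: powr_add[symmetric] exp_add[symmetric] algebra_simps)
  qed
  show ?thesis
  proof (rule strict_mono_onI)
    fix s t :: real
    assume st: "s \<in> {0..}" "t \<in> {0..}" "s < t"
    have "\<psi> (\<alpha> + \<beta> * s) < \<psi> (\<alpha> + \<beta> * t)"
      unfolding \<psi>_def using assms st arg_ge_1[of s] arg_ge_1[of t]
      by (intro strict_mono_onD[OF Gamma_qGamma_kernel_strict_mono[OF q]]) auto
    thus "\<phi> s < \<phi> t"
      using st \<phi>_eq[of s] \<phi>_eq[of t] q by simp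
  qed
qed

lemma rescaled_bounds_of_strict_mono:
  fixes u r k t :: real and g \<phi> :: "real \<Rightarrow> real"
  assumes "0 < u" "0 < t" "t < 1"
    and \<phi>_def: "\<And>t. \<phi> t = u powr (- r * t) * exp (k * t) * g t"
    and mono: "strict_mono_on {0..} \<phi>"
  shows "u powr (r * t) * exp (- k * t) * g 0 < g t"
    and "g t < u powr (r * (t - 1)) * exp (k * (1 - t)) * g 1"
proof -
  define M where "M = u powr (r * t) * exp (- k * t)"
  have "0 < M" unfolding M_def using assms by simp
  have g_eq: "g s = u powr (r * s) * exp (- k * s) * \<phi> s" for s
    unfolding \<phi>_def using \<open>0 < u\<close> by (simp add: powr_minus exp_minus field_simps)
  have "\<phi> 0 < \<phi> t" and "\<phi> t < \<phi> 1"
    using \<open>0 < t\<close> \<open>t < 1\<close> by (auto intro: strict_mono_onD[OF mono])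
  hence "M * \<phi> 0 < M * \<phi> t" and "M * \<phi> t < M * \<phi> 1"
    using \<open>0 < M\<close> by simp_all
  moreover have "u powr (r * t) * exp (- k * t) * g 0 = M * \<phi> 0" and "g t = M * \<phi> t"
    and "u powr (r * (t - 1)) * exp (k * (1 - t)) * g 1 = M * \<phi> 1"
    unfolding g_eq[of 0] g_eq[of t] g_eq[of 1] M_def
    by (simp_all add: powr_add[symmetric] exp_add[symmetric] algebra_simps)
  ultimately show "u powr (r * t) * exp (- k * t) * g 0 < g t"
    and "g t < u powr (r * (t - 1)) * exp (k * (1 - t)) * g 1"
    by simp_all
qed

theorem theorem3p8:
  fixes q a b \<alpha> \<beta> :: real and \<phi> :: "real \<Rightarrow> real"
  assumes hq: "0 < q" "q < 1"
    and ha: "0 < a" and hb: "0 < b" and h\<alpha>: "0 < \<alpha>" and h\<beta>: "0 < \<beta>"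
    and hab: "\<forall>t>0. \<alpha> + \<beta> * t > 1"
    and h\<phi>: "\<And>t. \<phi> t = (1 - q) powr (- b * \<beta> * t) * exp (a * \<beta> * euler_mascheroni * t)
                 * Gamma (\<alpha> + \<beta> * t) powr a / qGamma q (\<alpha> + \<beta> * t) powr b"
  shows "strict_mono_on {0<..} \<phi> \<and>
    (\<forall>t\<in>{0<..<1}.
       (1 - q) powr (b * \<beta> * t) * exp (- a * \<beta> * euler_mascheroni * t)
         * Gamma \<alpha> powr a / qGamma q \<alpha> powr b
       < Gamma (\<alpha> + \<beta> * t) powr a / qGamma q (\<alpha> + \<beta> * t) powr b
     \<and> Gamma (\<alpha> + \<beta> * t) powr a / qGamma q (\<alpha> + \<beta> * t) powr b
       < (1 - q) powr (b * \<beta> * (t - 1)) * exp (a * \<beta> * euler_mascheroni * (1 - t))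
         * Gamma (\<alpha> + \<beta>) powr a / qGamma q (\<alpha> + \<beta>) powr b)"
proof -
  have "1 \<le> \<alpha>"
    using hab[rule_format, of "(1 - \<alpha>) / \<beta>"] h\<beta> by (cases "1 \<le> \<alpha>") auto
  have mono: "strict_mono_on {0..} \<phi>"
    by (rule strict_mono_on_rescaled_Gamma_qGamma_ratio[OF hq less_imp_le[OF ha] hb \<open>1 \<le> \<alpha>\<close> h\<beta> h\<phi>])
  define g where "g t = Gamma (\<alpha> + \<beta> * t) powr a / qGamma q (\<alpha> + \<beta> * t) powr b" for t
  have "\<phi> t = (1 - q) powr (- (b * \<beta>) * t) * exp (a * \<beta> * euler_mascheroni * t) * g t" for t
    by (simp add: h\<phi> g_def)
  from rescaled_bounds_of_strict_mono[OF _ _ _ this mono] hq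
  have "\<forall>t\<in>{0<..<1}. (1 - q) powr (b * \<beta> * t) * exp (- a * \<beta> * euler_mascheroni * t) * g 0 < g t
      \<and> g t < (1 - q) powr (b * \<beta> * (t - 1)) * exp (a * \<beta> * euler_mascheroni * (1 - t)) * g 1"
    by simp
  moreover have "strict_mono_on {0<..} \<phi>"
    by (rule monotone_on_subset[OF mono]) auto
  ultimately show ?thesis
    by (simp add: g_def)
qed

end
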